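(* Let ${\bf F}=(F_1,F_2,F_3)$ be a triple of flags in $\mathcal F(\mathbb C^d)$ in general position satisfying property-$\star$, and let $\mathrm{Stab}(F_1,F_2)\subset\mathrm{SL}_d(\mathbb C)$ be the stabilizer of the ordered pair $(F_1,F_2)$. For $B\in\mathrm{Stab}(F_1,F_2)$ and $i\in\{1,\dots,d\}$ let $\mu_i(B)$ be the eigenvalue of $B$ on the line $F_2^i\cap F_1^{d-i+1}$. Then: (1) a sequence $(B_n)$ in $\mathrm{Stab}(F_1,F_2)$ satisfies $B_n^{-1}\cdot F_3\to F_1$ if and only if $\max_{1\le i\le d-1}|\mu_{i+1}(B_n)/\mu_i(B_n)|\to0$; (2) there is $C>0$ such that for every sequence $(B_n)$ in $\mathrm{Stab}(F_1,F_2)$ with $B_n^{-1}\cdot F_3\to F_1$, for all sufficiently large $n$, \[C^{-1}\max_{i}\Big|\frac{\mu_{i+1}(B_n)}{\mu_i(B_n)}\Big|\le d_{\mathcal F}(B_n^{-1}\cdot F_3,F_1)\le C\max_i\Big|\frac{\mu_{i+1}(B_n)}{\mu_i(B_n)}\Big|.\]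
   Context: $\mathcal F(\mathbb C^d)$ is the space of complete flags with a fixed Riemannian distance $d_{\mathcal F}$. Flags $F,G$ are transverse if $F^j+G^{d-j}=\mathbb C^d$ for all $j$; $F_1,F_2,F_3$ are in general position if $F_1^{k_1}+F_2^{k_2}+F_3^{k_3}=\mathbb C^d$ for all positive integers $k_i$ summing to $d$. A triple $(F_1,F_2,F_3)$ satisfies property-$\star$ if (1) $F_1,F_2$ and $F_2,F_3$ are transverse pairs, and (2) with $L_i=F_2^i\cap F_1^{d-i+1}$ and $\pi_i:\mathbb C^d\to L_i$ the projection with kernel $\bigoplus_{j\ne i}L_j$, for every $i\in\{1,\dots,d-1\}$ the restriction of $\pi_i$ to the line $F_2^{i+1}\cap F_3^{d-i}$ is an isomorphism onto $L_i$. *)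

theory Defs
  imports "HOL-Analysis.Analysis"
begin

text \<open>Vectors of C^d are \<open>complex^'n\<close> with d = CARD('n); complex-linear notions
  are those of the interpretation \<open>vec\<close> (scalar multiplication \<open>*s\<close>).
  A complete flag is F : nat => subspace with F j of complex dimension min j d,
  increasing in j (so F 0 = {0} and F j = C^d for j >= d).\<close>

definition is_flag :: "(nat \<Rightarrow> (complex^'n) set) \<Rightarrow> bool" where
  "is_flag F \<longleftrightarrow> (\<forall>j. vec.subspace (F j) \<and> vec.dim (F j) = min j CARD('n)) \<and>
                 (\<forall>j k. j \<le> k \<longrightarrow> F j \<subseteq> F k)"

definition ssum :: "(complex^'n) set \<Rightarrow> (complex^'n) set \<Rightarrow> (complex^'n) set" where
  "ssum U V = {u + v | u v. u \<in> U \<and> v \<in> V}"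

definition transverse :: "(nat \<Rightarrow> (complex^'n) set) \<Rightarrow> (nat \<Rightarrow> (complex^'n) set) \<Rightarrow> bool" where
  "transverse F G \<longleftrightarrow> (\<forall>j\<le>CARD('n). ssum (F j) (G (CARD('n) - j)) = UNIV)"

definition general_position ::
  "(nat \<Rightarrow> (complex^'n) set) \<Rightarrow> (nat \<Rightarrow> (complex^'n) set) \<Rightarrow> (nat \<Rightarrow> (complex^'n) set) \<Rightarrow> bool" where
  "general_position F1 F2 F3 \<longleftrightarrow>
     (\<forall>k1 k2 k3. 0 < k1 \<and> 0 < k2 \<and> 0 < k3 \<and> k1 + k2 + k3 = CARD('n) \<longrightarrow>
        ssum (ssum (F1 k1) (F2 k2)) (F3 k3) = UNIV)"

definition Lline :: "(nat \<Rightarrow> (complex^'n) set) \<Rightarrow> (nat \<Rightarrow> (complex^'n) set) \<Rightarrow> nat \<Rightarrow> (complex^'n) set" where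
  "Lline F1 F2 i = F2 i \<inter> F1 (CARD('n) - i + 1)"

definition proj_L :: "(nat \<Rightarrow> (complex^'n) set) \<Rightarrow> (nat \<Rightarrow> (complex^'n) set) \<Rightarrow> nat \<Rightarrow> complex^'n \<Rightarrow> complex^'n" where
  "proj_L F1 F2 i x = (THE y. y \<in> Lline F1 F2 i \<and>
      x - y \<in> vec.span (\<Union>j\<in>{1..CARD('n)} - {i}. Lline F1 F2 j))"

definition property_star ::
  "(nat \<Rightarrow> (complex^'n) set) \<Rightarrow> (nat \<Rightarrow> (complex^'n) set) \<Rightarrow> (nat \<Rightarrow> (complex^'n) set) \<Rightarrow> bool" where
  "property_star F1 F2 F3 \<longleftrightarrow> transverse F1 F2 \<and> transverse F2 F3 \<and>
     (\<forall>i\<in>{1..<CARD('n)}. bij_betw (proj_L F1 F2 i)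
          (F2 (i + 1) \<inter> F3 (CARD('n) - i)) (Lline F1 F2 i))"

definition flag_act :: "complex^'n^'n \<Rightarrow> (nat \<Rightarrow> (complex^'n) set) \<Rightarrow> (nat \<Rightarrow> (complex^'n) set)" where
  "flag_act B F = (\<lambda>j. (\<lambda>x. B *v x) ` F j)"

definition Stab :: "(nat \<Rightarrow> (complex^'n) set) \<Rightarrow> (nat \<Rightarrow> (complex^'n) set) \<Rightarrow> (complex^'n^'n) set" where
  "Stab F1 F2 = {B. det B = 1 \<and> flag_act B F1 = F1 \<and> flag_act B F2 = F2}"

definition mu :: "(nat \<Rightarrow> (complex^'n) set) \<Rightarrow> (nat \<Rightarrow> (complex^'n) set) \<Rightarrow> complex^'n^'n \<Rightarrow> nat \<Rightarrow> complex" where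
  "mu F1 F2 B i = (SOME c. \<forall>v\<in>Lline F1 F2 i. B *v v = c *s v)"

definition ratio_max :: "(nat \<Rightarrow> (complex^'n) set) \<Rightarrow> (nat \<Rightarrow> (complex^'n) set) \<Rightarrow> complex^'n^'n \<Rightarrow> real" where
  "ratio_max F1 F2 B = Max (insert 0 ((\<lambda>i. norm (mu F1 F2 B (i + 1) / mu F1 F2 B i)) ` {1..<CARD('n)}))"

definition hausdorff_dist :: "'a::metric_space set \<Rightarrow> 'a set \<Rightarrow> real" where
  "hausdorff_dist A B = max (SUP a\<in>A. infdist a B) (SUP b\<in>B. infdist b A)"

text \<open>It is
  bi-Lipschitz equivalent to any Riemannian distance on the flag manifold.\<close>
definition flag_dist :: "(nat \<Rightarrow> (complex^'n) set) \<Rightarrow> (nat \<Rightarrow> (complex^'n) set) \<Rightarrow> real" where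
  "flag_dist F G = (\<Sum>j\<in>{1..<CARD('n)}. hausdorff_dist (sphere 0 1 \<inter> F j) (sphere 0 1 \<inter> G j))"

end

theory Submission
  imports Defs
begin

text \<open>
  An element B of the stabiliser of F1 and F2 preserves every line L_i = F2^i \<inter> F1^(d-i+1),
  and these lines span C^d.  In a basis v_1, ..., v_d with v_i \<in> L_i the matrix B is diagonal
  with eigenvalues \<mu>_i, F2^m is spanned by the first m basis vectors and F1^k by the last k,
  so C^d = F1^k \<oplus> F2^(d-k) splits every vector into a top and a bottom part.

  Upper bound: since F3^k meets F2^(d-k) trivially, the top part of a vector of F3^k is
  comparable to the vector itself.  Applying B^-1 divides the j-th coordinate by \<mu>_j, and if
  \<rho> = max |\<mu>_(i+1) / \<mu>_i| \<le> 1 then |\<mu>_l| \<le> \<rho> |\<mu>_j| for j < l, so relative to the top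
  coordinates the bottom ones shrink by the factor \<rho>.  Hence the bottom part of a vector of
  B^-1 F3^k is O(\<rho>) times its top part, and the unit spheres of B^-1 F3^k and F1^k are O(\<rho>)
  apart.

  Lower bound: property-star provides y \<in> F2^(i+1) \<inter> F3^(d-i) whose i-th coordinate is 1 and
  whose (i+1)-st coordinate is nonzero.  In B^-1 (\<mu>_(i+1) y) the (i+1)-st coordinate is
  unchanged while the i-th coordinate becomes \<mu>_(i+1) / \<mu>_i, which keeps this vector, after
  normalisation, at distance of order min (|\<mu>_(i+1) / \<mu>_i|) 1 from F1^(d-i).

  So the flag distance and the maximal ratio are comparable as long as the ratio is small,
  which gives both statements.
\<close>

lemma scaleR_vec_eq_smult: "r *\<^sub>R (x::complex^'n) = complex_of_real r *s x"
  by (simp add: vec_eq_iff) (simp add: scaleR_conv_of_real)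

lemma vec_subspace_imp_subspace: "vec.subspace (S::(complex^'n) set) \<Longrightarrow> subspace S"
  unfolding subspace_def vec.subspace_def by (auto simp: scaleR_vec_eq_smult)

lemma vec_subspace_scaleR: "vec.subspace (S::(complex^'n) set) \<Longrightarrow> x \<in> S \<Longrightarrow> r *\<^sub>R x \<in> S"
  by (simp add: scaleR_vec_eq_smult vec.subspace_scale)

lemma vec_subspace_sgn: "vec.subspace (S::(complex^'n) set) \<Longrightarrow> x \<in> S \<Longrightarrow> sgn x \<in> S"
  by (simp add: sgn_div_norm vec_subspace_scaleR)

lemma norm_vec_smult: "norm (c *s (x::complex^'n)) = norm c * norm x"
  unfolding norm_vec_def by (simp add: norm_mult L2_set_right_distrib)

lemma bounded_linear_vec_functional:
  fixes f :: "complex^'n \<Rightarrow> complex"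
  assumes "\<And>x y. f (x + y) = f x + f y" "\<And>c x. f (c *s x) = c * f x"
  shows "bounded_linear f"
proof -
  have "linear f"
    by (rule linearI) (auto simp: assms scaleR_vec_eq_smult scaleR_conv_of_real)
  then show ?thesis by (simp add: linear_conv_bounded_linear)
qed

lemma vec_subspaces_Int_trivial:
  fixes U V :: "(complex^'n) set"
  assumes "vec.subspace U" "vec.subspace V" "ssum U V = UNIV" "vec.dim U + vec.dim V = CARD('n)"
  shows "U \<inter> V \<subseteq> {0}"
proof -
  have "vec.dim (ssum U V) + vec.dim (U \<inter> V) = vec.dim U + vec.dim V"
    using vec.dim_sums_Int[OF assms(1,2)] unfolding ssum_def .
  then have "vec.dim (U \<inter> V) = 0" using assms(3,4) by (simp add: card_cart_basis)
  then show ?thesis by simp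
qed

lemma vec_subspaces_Int_nontrivial:
  fixes U V :: "(complex^'n) set"
  assumes "vec.subspace U" "vec.subspace V" "vec.dim U + vec.dim V = CARD('n) + 1"
  shows "\<exists>x\<in>U \<inter> V. x \<noteq> 0"
proof -
  have "vec.dim (ssum U V) + vec.dim (U \<inter> V) = vec.dim U + vec.dim V"
    using vec.dim_sums_Int[OF assms(1,2)] unfolding ssum_def .
  moreover have "vec.dim (ssum U V) \<le> CARD('n)"
    using vec.dim_subset_UNIV by (simp add: card_cart_basis vec.dimension_def)
  ultimately have "vec.dim (U \<inter> V) \<noteq> 0" using assms(3) by linarith
  then show ?thesis by auto
qed

lemma matrix_vector_mult_scaleR_complex: "(A::complex^'n^'m) *v (r *\<^sub>R x) = r *\<^sub>R (A *v x)"
  by (simp add: scaleR_vec_eq_smult vec.scale)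

lemma matrix_inv_cancel:
  fixes B :: "complex^'n^'n"
  assumes "det B \<noteq> 0"
  shows "matrix_inv B *v (B *v x) = x"
proof -
  have "invertible B" using assms by (simp add: invertible_det_nz)
  then have "B ** matrix_inv B = mat 1 \<and> matrix_inv B ** B = mat 1"
    unfolding invertible_def matrix_inv_def by (rule someI_ex)
  then show ?thesis by (simp add: matrix_vector_mul_assoc)
qed

section \<open>Hausdorff distance between subsets of the unit sphere\<close>

lemma bdd_above_infdist_sphere:
  fixes A B :: "'a::real_normed_vector set"
  assumes "A \<subseteq> sphere 0 1" "B \<subseteq> sphere 0 1"
  shows "bdd_above ((\<lambda>a. infdist a B) ` A)"
proof (rule bdd_aboveI2)
  fix a assume "a \<in> A"
  show "infdist a B \<le> 2"
  proof (cases "B = {}")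
    case False
    then obtain b where "b \<in> B" by blast
    have "infdist a B \<le> dist a b" by (rule infdist_le[OF \<open>b \<in> B\<close>])
    also have "\<dots> \<le> norm a + norm b" by (simp add: dist_norm norm_triangle_ineq4)
    also have "\<dots> = 2" using assms \<open>a \<in> A\<close> \<open>b \<in> B\<close> by (auto simp: subset_iff)
    finally show ?thesis .
  qed (simp add: infdist_def)
qed

lemma hausdorff_dist_nonneg:
  assumes "B \<noteq> {}" "bdd_above ((\<lambda>b. infdist b A) ` B)"
  shows "0 \<le> hausdorff_dist A B"
proof -
  obtain b where "b \<in> B" using assms(1) by blast
  have "0 \<le> infdist b A" by (rule infdist_nonneg)
  also have "\<dots> \<le> (SUP b\<in>B. infdist b A)" by (rule cSUP_upper[OF \<open>b \<in> B\<close> assms(2)])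
  finally show ?thesis unfolding hausdorff_dist_def by simp
qed

lemma hausdorff_dist_le:
  assumes "A \<noteq> {}" "B \<noteq> {}" "\<And>a. a \<in> A \<Longrightarrow> \<exists>b\<in>B. dist a b \<le> e"
    "\<And>b. b \<in> B \<Longrightarrow> \<exists>a\<in>A. dist b a \<le> e"
  shows "hausdorff_dist A B \<le> e"
  unfolding hausdorff_dist_def
proof (rule max.boundedI)
  show "(SUP a\<in>A. infdist a B) \<le> e"
    by (rule cSUP_least[OF assms(1)]) (meson assms(3) infdist_le2)
  show "(SUP b\<in>B. infdist b A) \<le> e"
    by (rule cSUP_least[OF assms(2)]) (meson assms(4) infdist_le2)
qed

lemma hausdorff_dist_ge:
  assumes "a \<in> A" "B \<noteq> {}" "bdd_above ((\<lambda>a. infdist a B) ` A)" "\<And>b. b \<in> B \<Longrightarrow> e \<le> dist a b"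
  shows "e \<le> hausdorff_dist A B"
proof -
  have "e \<le> infdist a B"
    unfolding infdist_notempty[OF assms(2)] by (rule cINF_greatest[OF assms(2)]) (use assms(4) in auto)
  also have "\<dots> \<le> (SUP a\<in>A. infdist a B)" by (rule cSUP_upper[OF assms(1,3)])
  finally show ?thesis unfolding hausdorff_dist_def by simp
qed

lemma dist_sgn_le:
  fixes t v :: "'a::real_normed_vector"
  assumes "norm t = 1" "v \<noteq> 0"
  shows "dist t (sgn v) \<le> 2 * norm (v - t)"
proof -
  have "v - sgn v = (1 - 1 / norm v) *\<^sub>R v" by (simp add: sgn_div_norm algebra_simps inverse_eq_divide)
  then have "norm (v - sgn v) = \<bar>(1 - 1 / norm v) * norm v\<bar>" by (simp add: abs_mult)
  also have "\<dots> = \<bar>norm v - 1\<bar>" using assms(2) by (simp add: left_diff_distrib)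
  also have "\<dots> = \<bar>norm v - norm t\<bar>" using assms(1) by simp
  also have "\<dots> \<le> norm (v - t)" by (rule norm_triangle_ineq3)
  finally have "norm (v - sgn v) \<le> norm (v - t)" .
  moreover have "dist t (sgn v) \<le> norm (t - v) + norm (v - sgn v)"
    unfolding dist_norm by (rule order.trans[OF _ norm_triangle_ineq]) simp
  ultimately show ?thesis by (simp add: norm_minus_commute)
qed

lemma hausdorff_dist_unit_spheres_le:
  fixes A F :: "'a::real_normed_vector set"
  assumes sgn_A: "\<And>x. x \<in> A \<Longrightarrow> sgn x \<in> A" and sgn_F: "\<And>x. x \<in> F \<Longrightarrow> sgn x \<in> F"
    and h: "0 \<le> h" "h \<le> 1 / 2" and "sphere 0 1 \<inter> F \<noteq> {}"
    and near_F: "\<And>s. s \<in> A \<Longrightarrow> \<exists>a\<in>F. norm (s - a) \<le> h * norm a"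
    and near_A: "\<And>t. t \<in> F \<Longrightarrow> norm t = 1 \<Longrightarrow> \<exists>y\<in>A. norm (y - t) \<le> h"
  shows "hausdorff_dist (sphere 0 1 \<inter> A) (sphere 0 1 \<inter> F) \<le> 4 * h"
proof -
  have close_A: "\<exists>s\<in>sphere 0 1 \<inter> A. dist t s \<le> 4 * h" if t: "t \<in> sphere 0 1 \<inter> F" for t
  proof -
    from t near_A obtain y where y: "y \<in> A" "norm (y - t) \<le> h" by auto
    have "1 \<le> norm y + norm (y - t)"
      using t norm_triangle_ineq2[of t y] by (simp add: norm_minus_commute)
    then have "y \<noteq> 0" using y(2) h by auto
    then have "sgn y \<in> sphere 0 1 \<inter> A" using sgn_A[OF y(1)] by (simp add: norm_sgn)
    moreover have "dist t (sgn y) \<le> 2 * norm (y - t)" using t \<open>y \<noteq> 0\<close> by (intro dist_sgn_le) auto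
    ultimately show ?thesis using y(2) h by (intro bexI[of _ "sgn y"]) auto
  qed
  have close_F: "\<exists>t\<in>sphere 0 1 \<inter> F. dist s t \<le> 4 * h" if s: "s \<in> sphere 0 1 \<inter> A" for s
  proof -
    from s near_F obtain a where a: "a \<in> F" "norm (s - a) \<le> h * norm a" by auto
    have "norm a \<le> norm s + norm (s - a)"
      using norm_triangle_ineq2[of a s] by (simp add: norm_minus_commute)
    also have "\<dots> \<le> 1 + norm a / 2"
      using s a(2) mult_right_mono[OF h(2) norm_ge_zero[of a]] by simp
    finally have "norm a \<le> 2" by simp
    have "a \<noteq> 0" using s a(2) by auto
    then have "sgn a \<in> sphere 0 1 \<inter> F" using sgn_F[OF a(1)] by (simp add: norm_sgn)
    moreover have "dist s (sgn a) \<le> 2 * norm (a - s)" using s \<open>a \<noteq> 0\<close> by (intro dist_sgn_le) auto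
    moreover have "2 * norm (a - s) \<le> 4 * h"
      using a(2) \<open>norm a \<le> 2\<close> mult_left_mono[OF \<open>norm a \<le> 2\<close> h(1)]
      by (simp add: norm_minus_commute)
    ultimately show ?thesis by (intro bexI[of _ "sgn a"]) auto
  qed
  obtain t where "t \<in> sphere 0 1 \<inter> F" using assms(5) by blast
  then show ?thesis
    using close_A close_F by (intro hausdorff_dist_le) (blast, blast, auto simp: dist_commute)
qed

lemma hausdorff_dist_unit_spheres_ge:
  fixes P :: "'a::real_normed_vector \<Rightarrow> 'b::real_normed_vector"
  assumes P: "bounded_linear P" "\<And>x. norm (P x) \<le> K * norm x" "0 < K"
    and "\<And>s. s \<in> F \<Longrightarrow> P s = 0" "u \<in> A" "A \<subseteq> sphere 0 1" "F \<subseteq> sphere 0 1" "F \<noteq> {}"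
  shows "norm (P u) / K \<le> hausdorff_dist A F"
proof (rule hausdorff_dist_ge[OF assms(5,8) bdd_above_infdist_sphere[OF assms(6,7)]])
  fix s assume "s \<in> F"
  then have "norm (P u) = norm (P (u - s))"
    using assms(4) by (simp add: linear_diff[OF bounded_linear.linear[OF P(1)]])
  also have "\<dots> \<le> K * dist u s" using P(2) by (simp add: dist_norm)
  finally show "norm (P u) / K \<le> dist u s" using P(3) by (simp add: divide_le_eq mult.commute)
qed

lemma finite_ex_common_bound:
  fixes P :: "'a \<Rightarrow> real \<Rightarrow> bool"
  assumes "finite S" "\<And>i. i \<in> S \<Longrightarrow> \<exists>C>0. P i C"
    and "\<And>i C C'. i \<in> S \<Longrightarrow> 0 < C \<Longrightarrow> P i C \<Longrightarrow> C \<le> C' \<Longrightarrow> P i C'"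
  shows "\<exists>C>0. \<forall>i\<in>S. P i C"
  using assms
proof (induction S rule: finite_induct)
  case empty
  show ?case using zero_less_one by blast
next
  case (insert x S)
  obtain C1 where C1: "C1 > 0" "\<forall>i\<in>S. P i C1" using insert.IH insert.prems by blast
  obtain C2 where C2: "C2 > 0" "P x C2" using insert.prems by blast
  have "P i (max C1 C2)" if "i \<in> insert x S" for i
  proof (cases "i = x")
    case True
    then show ?thesis using insert.prems(2)[of x C2 "max C1 C2"] C2 by simp
  next
    case False
    then show ?thesis using insert.prems(2)[of i C1 "max C1 C2"] C1 that by simp
  qed
  then show ?case using C1(1) by (intro exI[of _ "max C1 C2"]) auto
qed

lemma min_le_mult_frac:
  fixes b s n :: real
  assumes "0 < b" "0 \<le> s" "0 < n" "n \<le> b + s"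
  shows "min s 1 \<le> 2 * max b 1 * (s / n)"
proof -
  have "min s 1 \<le> 2 * max b 1 * (s / (b + s))"
  proof (cases "s \<le> b")
    case True
    have "s = 2 * b * (s / (2 * b))" using assms by simp
    also have "\<dots> \<le> 2 * max b 1 * (s / (b + s))"
      using assms True by (intro mult_mono divide_left_mono) auto
    finally show ?thesis by simp
  next
    case False
    have "1 = 2 * (1 / 2 :: real)" by simp
    also have "\<dots> \<le> 2 * max b 1 * (s / (b + s))"
      using assms False by (intro mult_mono) (auto simp: field_simps)
    finally show ?thesis by simp
  qed
  also have "\<dots> \<le> 2 * max b 1 * (s / n)"
    using assms by (intro mult_left_mono divide_left_mono) auto
  finally show ?thesis .
qed

lemma
  fixes f g :: "'a \<Rightarrow> real"
  assumes C: "C > 0" and nonneg: "\<And>x. 0 \<le> f x" "\<And>x. 0 \<le> g x"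
    and lower: "\<And>x. min (g x) 1 \<le> C * f x"
    and upper: "\<And>x. g x \<le> 1 / C \<Longrightarrow> f x \<le> C * g x"
  shows tendsto_zero_iff_if_comparable: "(f \<longlongrightarrow> 0) F \<longleftrightarrow> (g \<longlongrightarrow> 0) F"
    and eventually_comparable_if_tendsto_zero:
      "(f \<longlongrightarrow> 0) F \<Longrightarrow> \<forall>\<^sub>F x in F. g x / C \<le> f x \<and> f x \<le> C * g x"
proof -
  have C': "0 < 1 / C" using C by simp
  have g_le_f: "\<forall>\<^sub>F x in F. g x \<le> C * f x" if "(f \<longlongrightarrow> 0) F"
    using order_tendstoD(2)[OF that C']
  proof eventually_elim
    case (elim x)
    then have "min (g x) 1 < 1" using lower[of x] C by (simp add: field_simps)
    then show ?case using lower[of x] by (simp add: min_def split: if_splits)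
  qed
  have f_le_g: "\<forall>\<^sub>F x in F. f x \<le> C * g x" if "(g \<longlongrightarrow> 0) F"
    using order_tendstoD(2)[OF that C'] by eventually_elim (simp add: upper)
  have g_tendsto_0: "(g \<longlongrightarrow> 0) F" if "(f \<longlongrightarrow> 0) F"
    by (rule tendsto_sandwich[OF _ g_le_f[OF that] tendsto_const tendsto_mult_right_zero[OF that]])
      (simp add: nonneg)
  moreover have "(f \<longlongrightarrow> 0) F" if "(g \<longlongrightarrow> 0) F"
    by (rule tendsto_sandwich[OF _ f_le_g[OF that] tendsto_const tendsto_mult_right_zero[OF that]])
      (simp add: nonneg)
  ultimately show "(f \<longlongrightarrow> 0) F \<longleftrightarrow> (g \<longlongrightarrow> 0) F" by blast
  show "\<forall>\<^sub>F x in F. g x / C \<le> f x \<and> f x \<le> C * g x" if "(f \<longlongrightarrow> 0) F"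
    using g_le_f[OF that] f_le_g[OF g_tendsto_0[OF that]]
    by eventually_elim (use C in \<open>simp add: field_simps mult.commute\<close>)
qed

section \<open>The basis adapted to two transverse flags\<close>

lemma is_flagD:
  fixes F :: "nat \<Rightarrow> (complex^'n) set"
  assumes "is_flag F"
  shows "vec.subspace (F j)" "vec.dim (F j) = min j CARD('n)" "j \<le> k \<Longrightarrow> F j \<subseteq> F k"
  using assms unfolding is_flag_def by auto

lemma ratio_max_nonneg: "0 \<le> ratio_max F1 F2 B"
  unfolding ratio_max_def by (rule Max_ge) auto

lemma norm_ratio_le_ratio_max:
  "i \<in> {1..<CARD('n)} \<Longrightarrow> norm (mu F1 F2 B (i + 1) / mu F1 F2 B i) \<le> ratio_max F1 F2 B"
  for F1 F2 :: "nat \<Rightarrow> (complex^'n) set"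
  unfolding ratio_max_def by (rule Max_ge) auto

lemma ratio_max_attained:
  fixes F1 F2 :: "nat \<Rightarrow> (complex^'n) set"
  obtains "ratio_max F1 F2 B = 0"
  | i where "i \<in> {1..<CARD('n)}" "ratio_max F1 F2 B = norm (mu F1 F2 B (i + 1) / mu F1 F2 B i)"
proof -
  have "ratio_max F1 F2 B \<in> insert 0 ((\<lambda>i. norm (mu F1 F2 B (i + 1) / mu F1 F2 B i)) ` {1..<CARD('n)})"
    unfolding ratio_max_def by (rule Max_in) auto
  then show ?thesis using that by auto
qed

locale transverse_flags =
  fixes F1 F2 :: "nat \<Rightarrow> (complex^'n) set"
  assumes flag1: "is_flag F1" and flag2: "is_flag F2" and transverse12: "transverse F1 F2"
begin

lemma subspace_F1: "vec.subspace (F1 j)" and subspace_F2: "vec.subspace (F2 j)"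
  and dim_F1: "vec.dim (F1 j) = min j CARD('n)" and dim_F2: "vec.dim (F2 j) = min j CARD('n)"
  and mono_F1: "j \<le> k \<Longrightarrow> F1 j \<subseteq> F1 k" and mono_F2: "j \<le> k \<Longrightarrow> F2 j \<subseteq> F2 k"
  using is_flagD[OF flag1] is_flagD[OF flag2] by auto

lemma F2_Int_F1_trivial:
  assumes "m \<le> CARD('n)"
  shows "F2 m \<inter> F1 (CARD('n) - m) \<subseteq> {0}"
proof -
  have "ssum (F1 (CARD('n) - m)) (F2 (CARD('n) - (CARD('n) - m))) = UNIV"
    using transverse12 unfolding transverse_def by simp
  then have "F1 (CARD('n) - m) \<inter> F2 m \<subseteq> {0}"
    using assms by (intro vec_subspaces_Int_trivial) (simp_all add: subspace_F1 subspace_F2 dim_F1 dim_F2)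
  then show ?thesis by blast
qed

lemma subspace_Lline: "vec.subspace (Lline F1 F2 j)"
  unfolding Lline_def by (simp add: subspace_F1 subspace_F2 vec.subspace_inter)

lemma Lline_has_unit: assumes "j \<in> {1..CARD('n)}" shows "\<exists>x\<in>Lline F1 F2 j. norm x = 1"
proof -
  obtain x where "x \<in> Lline F1 F2 j" "x \<noteq> 0"
    using vec_subspaces_Int_nontrivial[OF subspace_F2 subspace_F1, of j "CARD('n) - j + 1"] assms
    unfolding Lline_def by (auto simp: dim_F1 dim_F2)
  then show ?thesis
    by (intro bexI[of _ "sgn x"]) (simp_all add: norm_sgn vec_subspace_sgn subspace_Lline)
qed

definition bvec :: "nat \<Rightarrow> complex^'n" where
  "bvec j = (SOME x. x \<in> Lline F1 F2 j \<and> norm x = 1)"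

lemma bvec_Lline: "j \<in> {1..CARD('n)} \<Longrightarrow> bvec j \<in> Lline F1 F2 j"
  and norm_bvec: "j \<in> {1..CARD('n)} \<Longrightarrow> norm (bvec j) = 1"
  using someI_ex[OF Lline_has_unit[unfolded Bex_def]] unfolding bvec_def by auto

lemma bvec_nonzero: "j \<in> {1..CARD('n)} \<Longrightarrow> bvec j \<noteq> 0"
  using norm_bvec by force

lemma bvec_in_F2: "j \<in> {1..CARD('n)} \<Longrightarrow> j \<le> m \<Longrightarrow> bvec j \<in> F2 m"
  using bvec_Lline mono_F2 unfolding Lline_def by blast

lemma bvec_in_F1:
  assumes "j \<in> {1..CARD('n)}" "CARD('n) - k < j"
  shows "bvec j \<in> F1 k"
proof -
  have "CARD('n) - j + 1 \<le> k" using assms by auto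
  then show ?thesis using bvec_Lline[OF assms(1)] mono_F1 unfolding Lline_def by blast
qed

lemma independent_bvec_initial:
  "m \<le> CARD('n) \<Longrightarrow> vec.independent (bvec ` {1..m}) \<and> inj_on bvec {1..m}"
proof (induction m)
  case 0
  then show ?case by (simp add: vec.independent_empty)
next
  case (Suc m)
  then have IH: "vec.independent (bvec ` {1..m})" "inj_on bvec {1..m}" by auto
  have "vec.span (bvec ` {1..m}) \<subseteq> F2 m"
    using Suc.prems bvec_in_F2 subspace_F2 by (intro vec.span_minimal) auto
  moreover have "bvec (Suc m) \<in> F1 (CARD('n) - m)" "bvec (Suc m) \<noteq> 0"
    using Suc.prems bvec_in_F1[of "Suc m" "CARD('n) - m"] bvec_nonzero[of "Suc m"] by auto
  ultimately have new: "bvec (Suc m) \<notin> vec.span (bvec ` {1..m})"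
    using F2_Int_F1_trivial[of m] Suc.prems by auto
  have eq: "{1..Suc m} = insert (Suc m) {1..m}" by auto
  have "vec.independent (bvec ` {1..Suc m})"
    unfolding eq image_insert by (rule vec.independent_insertI[OF new IH(1)])
  moreover have "bvec (Suc m) \<notin> bvec ` {1..m}" using new vec.span_base by blast
  then have "inj_on bvec {1..Suc m}" unfolding eq using IH(2) by simp
  ultimately show ?case by blast
qed

lemma independent_bvec: "vec.independent (bvec ` {1..CARD('n)})"
  and inj_on_bvec: "inj_on bvec {1..CARD('n)}"
  using independent_bvec_initial[of "CARD('n)"] by auto

lemma span_bvec: "vec.span (bvec ` {1..CARD('n)}) = UNIV"
proof -
  have "card (bvec ` {1..CARD('n)}) = CARD('n)" using card_image[OF inj_on_bvec] by simp
  then have "UNIV \<subseteq> vec.span (bvec ` {1..CARD('n)})"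
    by (intro vec.card_ge_dim_independent[OF _ independent_bvec]) (simp_all add: card_cart_basis)
  then show ?thesis by auto
qed

lemma F_eq_span_bvec:
  assumes "vec.subspace F" "vec.dim F = card S" "S \<subseteq> {1..CARD('n)}" "bvec ` S \<subseteq> F"
  shows "F = vec.span (bvec ` S)"
proof (rule vec.span_subspace[symmetric])
  have "inj_on bvec S" using inj_on_bvec assms(3) by (rule inj_on_subset)
  then show "F \<subseteq> vec.span (bvec ` S)"
    using assms vec.independent_mono[OF independent_bvec image_mono[OF assms(3)]]
    by (intro vec.card_ge_dim_independent) (auto simp: card_image)
qed (use assms in auto)

lemma F2_eq_span: "m \<le> CARD('n) \<Longrightarrow> F2 m = vec.span (bvec ` {1..m})"
  by (rule F_eq_span_bvec) (auto simp: subspace_F2 dim_F2 intro: bvec_in_F2)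

lemma F1_eq_span: "k \<le> CARD('n) \<Longrightarrow> F1 k = vec.span (bvec ` {CARD('n) - k + 1..CARD('n)})"
  by (rule F_eq_span_bvec) (auto simp: subspace_F1 dim_F1 intro: bvec_in_F1)

definition coord :: "nat \<Rightarrow> complex^'n \<Rightarrow> complex" where
  "coord j x = vec.representation (bvec ` {1..CARD('n)}) x (bvec j)"

lemma sum_coord_bvec: "(\<Sum>j\<in>{1..CARD('n)}. coord j x *s bvec j) = x"
proof -
  have "(\<Sum>b\<in>bvec ` {1..CARD('n)}. vec.representation (bvec ` {1..CARD('n)}) x b *s b) = x"
    by (rule vec.sum_representation_eq[OF independent_bvec]) (auto simp: span_bvec[unfolded One_nat_def])
  then show ?thesis unfolding coord_def sum.reindex[OF inj_on_bvec] by (simp add: o_def)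
qed

lemma coord_add: "coord j (x + y) = coord j x + coord j y"
  and coord_smult: "coord j (c *s x) = c * coord j x"
  and coord_diff: "coord j (x - y) = coord j x - coord j y"
  unfolding coord_def
  using vec.representation_add[OF independent_bvec] vec.representation_scale[OF independent_bvec]
    vec.representation_diff[OF independent_bvec]
  by (simp_all add: span_bvec[unfolded One_nat_def])

lemma coord_zero: "coord j 0 = 0"
  using coord_smult[of j 0 0] by simp

lemma coord_sum: "coord j (\<Sum>l\<in>S. f l) = (\<Sum>l\<in>S. coord j (f l))"
  unfolding coord_def vec.representation_sum[OF independent_bvec, of S f, unfolded span_bvec, OF UNIV_I]
  by simp

lemma bounded_linear_coord: "bounded_linear (coord j)"
  by (rule bounded_linear_vec_functional) (auto simp: coord_add coord_smult)

lemma coord_bvec: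
  "j \<in> {1..CARD('n)} \<Longrightarrow> l \<in> {1..CARD('n)} \<Longrightarrow> coord j (bvec l) = (if j = l then 1 else 0)"
  unfolding coord_def using vec.representation_basis[OF independent_bvec, of "bvec l"] inj_on_bvec
  by (auto simp: inj_on_eq_iff)

lemma coord_span:
  assumes "S \<subseteq> {1..CARD('n)}" "x \<in> vec.span (bvec ` S)" "j \<in> {1..CARD('n)} - S"
  shows "coord j x = 0"
proof -
  have "vec.representation (bvec ` {1..CARD('n)}) x = vec.representation (bvec ` S) x"
    by (rule vec.representation_extend[OF independent_bvec assms(2)]) (use assms in auto)
  moreover have "bvec j \<notin> bvec ` S" using assms inj_on_bvec by (auto simp: inj_on_eq_iff subset_iff)
  ultimately show ?thesis unfolding coord_def using vec.representation_ne_zero by metis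
qed

lemma coord_F2:
  "x \<in> F2 m \<Longrightarrow> m \<le> CARD('n) \<Longrightarrow> m < j \<Longrightarrow> j \<le> CARD('n) \<Longrightarrow> coord j x = 0"
  using coord_span[of "{1..m}" x j] F2_eq_span by auto

lemma coord_F1:
  "x \<in> F1 k \<Longrightarrow> k \<le> CARD('n) \<Longrightarrow> 1 \<le> j \<Longrightarrow> j \<le> CARD('n) - k \<Longrightarrow> coord j x = 0"
  using coord_span[of "{CARD('n) - k + 1..CARD('n)}" x j] F1_eq_span by auto

lemma coord_bound: "\<exists>K>0. \<forall>j\<in>{1..CARD('n)}. \<forall>x. norm (coord j x) \<le> K * norm x"
proof (rule finite_ex_common_bound[OF finite_atLeastAtMost])
  fix j
  obtain K where "K > 0" "\<forall>x. norm (coord j x) \<le> norm x * K"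
    using bounded_linear.pos_bounded[OF bounded_linear_coord] by blast
  then show "\<exists>K>0. \<forall>x. norm (coord j x) \<le> K * norm x" by (auto simp: mult.commute)
qed (meson mult_right_mono norm_ge_zero order.trans)

definition basis_proj :: "nat set \<Rightarrow> complex^'n \<Rightarrow> complex^'n" where
  "basis_proj S x = (\<Sum>j\<in>S. coord j x *s bvec j)"

lemma coord_sum_smult_bvec:
  assumes "S \<subseteq> {1..CARD('n)}" "j \<in> {1..CARD('n)}"
  shows "coord j (\<Sum>l\<in>S. c l *s bvec l) = (if j \<in> S then c j else 0)"
proof -
  have "coord j (\<Sum>l\<in>S. c l *s bvec l) = (\<Sum>l\<in>S. c l * (if j = l then 1 else 0))"
    unfolding coord_sum coord_smult using assms by (intro sum.cong) (auto simp: coord_bvec)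
  also have "\<dots> = (if j \<in> S then c j else 0)"
    using finite_subset[OF assms(1)] by (simp add: if_distrib sum.delta cong: if_cong)
  finally show ?thesis .
qed

lemma coord_basis_proj:
  "S \<subseteq> {1..CARD('n)} \<Longrightarrow> j \<in> {1..CARD('n)} \<Longrightarrow>
    coord j (basis_proj S x) = (if j \<in> S then coord j x else 0)"
  unfolding basis_proj_def by (rule coord_sum_smult_bvec)

lemma basis_proj_eq_self:
  assumes "S \<subseteq> {1..CARD('n)}" "\<And>j. j \<in> {1..CARD('n)} - S \<Longrightarrow> coord j x = 0"
  shows "basis_proj S x = x"
proof -
  have "basis_proj S x = (\<Sum>j\<in>{1..CARD('n)}. coord j x *s bvec j)"
    unfolding basis_proj_def by (rule sum.mono_neutral_left) (use assms in auto)
  then show ?thesis using sum_coord_bvec[of x] by simp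
qed

lemma basis_proj_add_complement:
  assumes "S \<subseteq> {1..CARD('n)}"
  shows "basis_proj S x + basis_proj ({1..CARD('n)} - S) x = x"
  unfolding basis_proj_def
  using sum.subset_diff[OF assms finite_atLeastAtMost, of "\<lambda>j. coord j x *s bvec j"]
  using sum_coord_bvec[of x] by (simp add: add.commute)

lemma norm_basis_proj_le:
  "S \<subseteq> {1..CARD('n)} \<Longrightarrow> norm (basis_proj S x) \<le> (\<Sum>j\<in>S. norm (coord j x))"
  unfolding basis_proj_def
  by (rule order.trans[OF norm_sum sum_mono]) (auto simp: norm_vec_smult norm_bvec)

lemma bounded_linear_basis_proj: "bounded_linear (basis_proj S)"
proof -
  have "linear (basis_proj S)"
    by (rule linearI)
      (simp_all add: basis_proj_def coord_add coord_smult scaleR_vec_eq_smult vector_sadd_rdistrib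
        sum.distrib scaleR_conv_of_real vec.scale_sum_right vector_smult_assoc)
  then show ?thesis by (simp add: linear_conv_bounded_linear)
qed

lemma basis_proj_in_F2: "m \<le> CARD('n) \<Longrightarrow> basis_proj {1..m} x \<in> F2 m"
  unfolding F2_eq_span basis_proj_def by (intro vec.span_sum vec.span_scale vec.span_base) auto

lemma basis_proj_in_F1: "k \<le> CARD('n) \<Longrightarrow> basis_proj {CARD('n) - k + 1..CARD('n)} x \<in> F1 k"
  unfolding F1_eq_span basis_proj_def by (intro vec.span_sum vec.span_scale vec.span_base) auto

lemma basis_proj_F1_eq_self:
  "k \<le> CARD('n) \<Longrightarrow> x \<in> F1 k \<Longrightarrow> basis_proj {CARD('n) - k + 1..CARD('n)} x = x"
  by (rule basis_proj_eq_self) (auto intro: coord_F1)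

lemma basis_proj_bottom_F1:
  "k \<le> CARD('n) \<Longrightarrow> x \<in> F1 k \<Longrightarrow> basis_proj {1..CARD('n) - k} x = 0"
  unfolding basis_proj_def by (rule sum.neutral) (auto simp: coord_F1)

text \<open>In lemma names the top part of x is basis_proj {d-k+1..d} x and its bottom part is
  basis_proj {1..d-k} x.\<close>

lemma basis_proj_top_add_bottom:
  "basis_proj {CARD('n) - k + 1..CARD('n)} x + basis_proj {1..CARD('n) - k} x = x"
proof -
  have "{1..CARD('n)} - {CARD('n) - k + 1..CARD('n)} = {1..CARD('n) - k}" by auto
  then show ?thesis using basis_proj_add_complement[of "{CARD('n) - k + 1..CARD('n)}" x] by simp
qed

lemma sum_norm_coord_le:
  "\<exists>K>0. \<forall>S\<subseteq>{1..CARD('n)}. \<forall>x. (\<Sum>j\<in>S. norm (coord j x)) \<le> K * norm (basis_proj S x)"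
proof -
  obtain K where K: "K > 0" "\<forall>j\<in>{1..CARD('n)}. \<forall>x. norm (coord j x) \<le> K * norm x"
    using coord_bound by blast
  have "(\<Sum>j\<in>S. norm (coord j x)) \<le> real CARD('n) * K * norm (basis_proj S x)"
    if S: "S \<subseteq> {1..CARD('n)}" for S x
  proof -
    have "(\<Sum>j\<in>S. norm (coord j x)) = (\<Sum>j\<in>S. norm (coord j (basis_proj S x)))"
      using S coord_basis_proj[OF S] by (intro sum.cong refl) auto
    also have "\<dots> \<le> real (card S) * (K * norm (basis_proj S x))"
      using S K by (intro sum_bounded_above) auto
    also have "\<dots> \<le> real CARD('n) * (K * norm (basis_proj S x))"
      using card_mono[OF finite_atLeastAtMost S] K by (intro mult_right_mono) auto
    finally show ?thesis by simp
  qed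
  then show ?thesis using K by (intro exI[of _ "real CARD('n) * K"]) auto
qed

lemma Lline_eq_smult_bvec:
  assumes j: "j \<in> {1..CARD('n)}" and x: "x \<in> Lline F1 F2 j"
  shows "x = coord j x *s bvec j"
proof -
  have "basis_proj {j} x = x"
  proof (rule basis_proj_eq_self)
    fix l assume l: "l \<in> {1..CARD('n)} - {j}"
    show "coord l x = 0"
    proof (cases "l < j")
      case True
      then show ?thesis using x l j by (intro coord_F1[of x "CARD('n) - j + 1"]) (auto simp: Lline_def)
    next
      case False
      then show ?thesis using x l j by (intro coord_F2[of x j]) (auto simp: Lline_def)
    qed
  qed (use j in auto)
  then show ?thesis unfolding basis_proj_def by simp
qed

lemma proj_L_eq:
  assumes j: "j \<in> {1..CARD('n)}"
  shows "proj_L F1 F2 j x = coord j x *s bvec j"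
  unfolding proj_L_def
proof (rule the_equality)
  let ?U = "vec.span (\<Union>l\<in>{1..CARD('n)} - {j}. Lline F1 F2 l)"
  have "x - coord j x *s bvec j = basis_proj ({1..CARD('n)} - {j}) x"
    using basis_proj_add_complement[of "{j}" x] j by (simp add: basis_proj_def algebra_simps)
  also have "\<dots> \<in> ?U"
    unfolding basis_proj_def by (intro vec.span_sum vec.span_scale vec.span_base) (use bvec_Lline in blast)
  finally show "coord j x *s bvec j \<in> Lline F1 F2 j \<and> x - coord j x *s bvec j \<in> ?U"
    using bvec_Lline[OF j] subspace_Lline vec.subspace_scale by blast
  fix y assume y: "y \<in> Lline F1 F2 j \<and> x - y \<in> ?U"
  have "?U \<subseteq> vec.span (bvec ` ({1..CARD('n)} - {j}))"
  proof (rule vec.span_minimal)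
    show "(\<Union>l\<in>{1..CARD('n)} - {j}. Lline F1 F2 l) \<subseteq> vec.span (bvec ` ({1..CARD('n)} - {j}))"
    proof
      fix z assume "z \<in> (\<Union>l\<in>{1..CARD('n)} - {j}. Lline F1 F2 l)"
      then obtain l where l: "l \<in> {1..CARD('n)} - {j}" "z \<in> Lline F1 F2 l" by blast
      then have "z = coord l z *s bvec l" using Lline_eq_smult_bvec by auto
      also have "\<dots> \<in> vec.span (bvec ` ({1..CARD('n)} - {j}))"
        by (intro vec.span_scale vec.span_base) (use l in auto)
      finally show "z \<in> vec.span (bvec ` ({1..CARD('n)} - {j}))" .
    qed
  qed auto
  then have "coord j (x - y) = 0" using y j by (intro coord_span[of "{1..CARD('n)} - {j}"]) auto
  then show "y = coord j x *s bvec j"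
    using Lline_eq_smult_bvec[OF j] y by (metis coord_diff eq_iff_diff_eq_0)
qed

context
  fixes B :: "complex^'n^'n"
  assumes stab: "B \<in> Stab F1 F2"
begin

lemma matrix_inv_stab: "matrix_inv B *v (B *v x) = x"
  using stab matrix_inv_cancel[of B] by (auto simp: Stab_def)

lemma stab_Lline: "x \<in> Lline F1 F2 j \<Longrightarrow> B *v x \<in> Lline F1 F2 j"
proof -
  have "flag_act B F1 = F1" "flag_act B F2 = F2" using stab by (simp_all add: Stab_def)
  then have "(\<lambda>x. B *v x) ` F1 k = F1 k" "(\<lambda>x. B *v x) ` F2 k = F2 k" for k
    unfolding flag_act_def by (simp_all add: fun_eq_iff)
  then show "x \<in> Lline F1 F2 j \<Longrightarrow> B *v x \<in> Lline F1 F2 j" unfolding Lline_def by blast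
qed

lemma stab_bvec: assumes j: "j \<in> {1..CARD('n)}" shows "B *v bvec j = mu F1 F2 B j *s bvec j"
proof -
  define c where "c = coord j (B *v bvec j)"
  have Bv: "B *v bvec j = c *s bvec j"
    unfolding c_def using Lline_eq_smult_bvec[OF j stab_Lline[OF bvec_Lline[OF j]]] .
  have "\<forall>v\<in>Lline F1 F2 j. B *v v = c *s v"
  proof
    fix v assume "v \<in> Lline F1 F2 j"
    have v: "v = coord j v *s bvec j" using Lline_eq_smult_bvec[OF j \<open>v \<in> Lline F1 F2 j\<close>] .
    then have "B *v v = coord j v *s (c *s bvec j)" by (metis Bv vec.scale)
    also have "\<dots> = c *s v" by (subst v) (simp add: mult.commute)
    finally show "B *v v = c *s v" .
  qed
  then have "\<forall>v\<in>Lline F1 F2 j. B *v v = mu F1 F2 B j *s v"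
    unfolding mu_def by (rule someI)
  then show ?thesis using bvec_Lline[OF j] by blast
qed

lemma mu_nonzero: assumes j: "j \<in> {1..CARD('n)}" shows "mu F1 F2 B j \<noteq> 0"
proof
  assume "mu F1 F2 B j = 0"
  then have "B *v bvec j = 0" using stab_bvec[OF j] by simp
  then show False using matrix_inv_stab[of "bvec j"] bvec_nonzero[OF j] by simp
qed

lemma coord_matrix_inv:
  assumes j: "j \<in> {1..CARD('n)}"
  shows "coord j (matrix_inv B *v x) = coord j x / mu F1 F2 B j"
proof -
  have inv_bvec: "matrix_inv B *v bvec l = (1 / mu F1 F2 B l) *s bvec l" if "l \<in> {1..CARD('n)}" for l
    using matrix_inv_stab[of "(1 / mu F1 F2 B l) *s bvec l"] stab_bvec[OF that] mu_nonzero[OF that]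
    by (simp add: vec.scale)
  have "matrix_inv B *v x = (\<Sum>l\<in>{1..CARD('n)}. (coord l x / mu F1 F2 B l) *s bvec l)"
    by (subst sum_coord_bvec[of x, symmetric]) (simp add: vec.sum vec.scale inv_bvec)
  then show ?thesis using coord_sum_smult_bvec[of "{1..CARD('n)}" j] j by simp
qed

lemma norm_mu_le_ratio_max:
  assumes small: "ratio_max F1 F2 B \<le> 1" and "1 \<le> j" "j < l" "l \<le> CARD('n)"
  shows "norm (mu F1 F2 B l) \<le> ratio_max F1 F2 B * norm (mu F1 F2 B j)"
proof -
  let ?r = "ratio_max F1 F2 B" and ?mu = "mu F1 F2 B"
  have ratio_step: "norm (?mu (Suc n)) \<le> ?r * norm (?mu n)" if "1 \<le> n" "Suc n \<le> CARD('n)" for n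
  proof -
    have "norm (?mu (n + 1) / ?mu n) \<le> ?r" using that by (intro norm_ratio_le_ratio_max) auto
    then show ?thesis using mu_nonzero[of n] that by (simp add: norm_divide divide_le_eq mult.commute)
  qed
  from \<open>j < l\<close> have "Suc j \<le> l" by simp
  then show ?thesis using \<open>l \<le> CARD('n)\<close>
  proof (induction l rule: dec_induct)
    case base
    then show ?case using ratio_step assms by simp
  next
    case (step n)
    have "norm (?mu (Suc n)) \<le> ?r * norm (?mu n)" using ratio_step step assms by simp
    also have "\<dots> \<le> norm (?mu n)" using mult_right_mono[OF small norm_ge_zero] by simp
    also have "\<dots> \<le> ?r * norm (?mu j)" using step by simp
    finally show ?case .
  qed
qed

lemma norm_coord_matrix_inv:
  "j \<in> {1..CARD('n)} \<Longrightarrow>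
    norm (coord j x) = norm (mu F1 F2 B j) * norm (coord j (matrix_inv B *v x))"
  using coord_matrix_inv mu_nonzero by (simp add: norm_divide)

lemma sum_norm_coord_le_ratio_max:
  assumes "ratio_max F1 F2 B \<le> 1" "1 \<le> j" "j < m"
  shows "(\<Sum>l\<in>{m..CARD('n)}. norm (coord l x))
    \<le> ratio_max F1 F2 B * norm (mu F1 F2 B j) * (\<Sum>l\<in>{m..CARD('n)}. norm (coord l (matrix_inv B *v x)))"
  unfolding sum_distrib_left
proof (rule sum_mono)
  fix l assume l: "l \<in> {m..CARD('n)}"
  then have "norm (mu F1 F2 B l) \<le> ratio_max F1 F2 B * norm (mu F1 F2 B j)"
    using assms by (intro norm_mu_le_ratio_max) auto
  then show "norm (coord l x)
      \<le> ratio_max F1 F2 B * norm (mu F1 F2 B j) * norm (coord l (matrix_inv B *v x))"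
    using l assms norm_coord_matrix_inv[of l x] by (simp add: mult_right_mono)
qed

end

end

section \<open>Comparing the flag distance with the eigenvalue ratios\<close>

locale star_triple =
  fixes F1 F2 F3 :: "nat \<Rightarrow> (complex^'n) set"
  assumes flags: "is_flag F1" "is_flag F2" "is_flag F3" and star: "property_star F1 F2 F3"

sublocale star_triple \<subseteq> transverse_flags F1 F2
  using flags star by unfold_locales (simp_all add: property_star_def)

context star_triple
begin

lemma subspace_F3: "vec.subspace (F3 j)" and dim_F3: "vec.dim (F3 j) = min j CARD('n)"
  using is_flagD[OF flags(3)] by auto

lemma ssum_F2_F3: "m \<le> CARD('n) \<Longrightarrow> ssum (F2 m) (F3 (CARD('n) - m)) = UNIV"
  using star unfolding property_star_def transverse_def by simp

lemma F2_Int_F3_trivial: "m \<le> CARD('n) \<Longrightarrow> F2 m \<inter> F3 (CARD('n) - m) \<subseteq> {0}"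
  by (rule vec_subspaces_Int_trivial[OF subspace_F2 subspace_F3 ssum_F2_F3]) (simp_all add: dim_F2 dim_F3)

abbreviation layer_dist :: "complex^'n^'n \<Rightarrow> nat \<Rightarrow> real" where
  "layer_dist B k \<equiv> hausdorff_dist (sphere 0 1 \<inter> (\<lambda>x. matrix_inv B *v x) ` F3 k) (sphere 0 1 \<inter> F1 k)"

lemma flag_dist_eq_sum_layer_dist:
  "flag_dist (flag_act (matrix_inv B) F3) F1 = (\<Sum>k\<in>{1..<CARD('n)}. layer_dist B k)"
  unfolding flag_dist_def flag_act_def ..

lemma unit_sphere_F1_nonempty: "1 \<le> k \<Longrightarrow> sphere 0 1 \<inter> F1 k \<noteq> {}"
  using bvec_in_F1[of "CARD('n)" k] norm_bvec[of "CARD('n)"] by force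

lemma layer_dist_nonneg: "1 \<le> k \<Longrightarrow> 0 \<le> layer_dist B k"
  by (intro hausdorff_dist_nonneg unit_sphere_F1_nonempty bdd_above_infdist_sphere) auto

lemma flag_dist_nonneg: "0 \<le> flag_dist (flag_act (matrix_inv B) F3) F1"
  unfolding flag_dist_eq_sum_layer_dist by (intro sum_nonneg layer_dist_nonneg) auto

lemma top_part_bounded_below_on_F3:
  assumes "k \<le> CARD('n)"
  shows "\<exists>c>0. \<forall>x\<in>F3 k. c * norm x \<le> norm (basis_proj {CARD('n) - k + 1..CARD('n)} x)"
proof -
  have "x = 0" if x: "x \<in> F3 k" and top: "basis_proj {CARD('n) - k + 1..CARD('n)} x = 0" for x
  proof -
    have "x \<in> F2 (CARD('n) - k)"
      using basis_proj_top_add_bottom[of k x] basis_proj_in_F2[of "CARD('n) - k" x] top by simp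
    moreover have "x \<in> F3 (CARD('n) - (CARD('n) - k))" using x assms by simp
    ultimately show "x = 0" using F2_Int_F3_trivial[of "CARD('n) - k"] by auto
  qed
  moreover have "subspace (F3 k)" by (rule vec_subspace_imp_subspace[OF subspace_F3])
  ultimately show ?thesis
    by (intro injective_imp_isometric[OF closed_subspace] bounded_linear_basis_proj) auto
qed

lemma top_part_of_F3_image_onto_F1:
  assumes "k \<le> CARD('n)" "B \<in> Stab F1 F2" "t \<in> F1 k"
  shows "\<exists>x\<in>F3 k. basis_proj {CARD('n) - k + 1..CARD('n)} (matrix_inv B *v x) = t"
proof -
  have "B *v t \<in> ssum (F2 (CARD('n) - k)) (F3 k)" using ssum_F2_F3[of "CARD('n) - k"] assms(1) by simp
  then obtain p x where p: "p \<in> F2 (CARD('n) - k)" and x: "x \<in> F3 k" and Bt: "B *v t = p + x"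
    unfolding ssum_def by blast
  have "coord l (matrix_inv B *v x) = coord l t" if l: "l \<in> {CARD('n) - k + 1..CARD('n)}" for l
  proof -
    have "matrix_inv B *v x = t - matrix_inv B *v p"
      using Bt matrix_inv_stab[OF assms(2), of t] by (metis add_diff_cancel_left' matrix_vector_mult_diff_distrib)
    moreover have "coord l p = 0" using coord_F2[OF p] l assms(1) by auto
    ultimately show ?thesis using coord_matrix_inv[OF assms(2), of l p] l by (simp add: coord_diff)
  qed
  then have "basis_proj {CARD('n) - k + 1..CARD('n)} (matrix_inv B *v x) =
      basis_proj {CARD('n) - k + 1..CARD('n)} t"
    unfolding basis_proj_def by simp
  then show ?thesis using basis_proj_F1_eq_self[OF assms(1,3)] x by auto
qed

lemma bottom_part_le_top_part:
  assumes "k \<le> CARD('n)"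
  shows "\<exists>C>0. \<forall>B\<in>Stab F1 F2. ratio_max F1 F2 B \<le> 1 \<longrightarrow> (\<forall>x\<in>F3 k.
    norm (basis_proj {1..CARD('n) - k} (matrix_inv B *v x))
      \<le> C * ratio_max F1 F2 B * norm (basis_proj {CARD('n) - k + 1..CARD('n)} (matrix_inv B *v x)))"
proof -
  let ?top = "{CARD('n) - k + 1..CARD('n)}" and ?bot = "{1..CARD('n) - k}"
  obtain c where c: "c > 0" "\<forall>x\<in>F3 k. c * norm x \<le> norm (basis_proj ?top x)"
    using top_part_bounded_below_on_F3[OF assms] by blast
  obtain K0 where K0: "K0 > 0" "\<forall>j\<in>{1..CARD('n)}. \<forall>x. norm (coord j x) \<le> K0 * norm x"
    using coord_bound by blast
  obtain K1 where K1: "K1 > 0"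
    "\<forall>S\<subseteq>{1..CARD('n)}. \<forall>x. (\<Sum>j\<in>S. norm (coord j x)) \<le> K1 * norm (basis_proj S x)"
    using sum_norm_coord_le by blast
  have "norm (basis_proj ?bot (matrix_inv B *v x))
      \<le> (real CARD('n) * (K0 / c * K1)) * ratio_max F1 F2 B * norm (basis_proj ?top (matrix_inv B *v x))"
    if B: "B \<in> Stab F1 F2" and small: "ratio_max F1 F2 B \<le> 1" and x: "x \<in> F3 k" for B x
  proof -
    let ?y = "matrix_inv B *v x" and ?mu = "mu F1 F2 B" and ?r = "ratio_max F1 F2 B"
    let ?h = "K0 / c * (?r * (K1 * norm (basis_proj ?top ?y)))"
    have each: "norm (coord j ?y) \<le> ?h" if j: "j \<in> ?bot" for j
    proof -
      have j': "j \<in> {1..CARD('n)}" using j by auto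
      have "norm (?mu j) * norm (coord j ?y) \<le> K0 * norm x"
        using norm_coord_matrix_inv[OF B j', of x] K0(2)[rule_format, OF j', of x] by simp
      also have "\<dots> \<le> K0 / c * norm (basis_proj ?top x)"
        using c x K0 by (simp add: field_simps)
      also have "\<dots> \<le> K0 / c * (\<Sum>l\<in>?top. norm (coord l x))"
        using c K0 by (intro mult_left_mono norm_basis_proj_le) auto
      also have "\<dots> \<le> K0 / c * (?r * norm (?mu j) * (\<Sum>l\<in>?top. norm (coord l ?y)))"
        using c K0 j by (intro mult_left_mono sum_norm_coord_le_ratio_max[OF B small]) auto
      also have "\<dots> \<le> K0 / c * (?r * norm (?mu j) * (K1 * norm (basis_proj ?top ?y)))"
        using K1(2) c K0 ratio_max_nonneg[of F1 F2 B] by (intro mult_left_mono) auto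
      finally have "norm (?mu j) * norm (coord j ?y) \<le> norm (?mu j) * ?h"
        by (simp add: algebra_simps)
      moreover have "0 < norm (?mu j)" using mu_nonzero[OF B j'] by simp
      ultimately show ?thesis by (rule mult_left_le_imp_le)
    qed
    have "norm (basis_proj ?bot ?y) \<le> (\<Sum>j\<in>?bot. norm (coord j ?y))"
      by (rule norm_basis_proj_le) auto
    also have "\<dots> \<le> real (card ?bot) * ?h" using each by (rule sum_bounded_above)
    also have "\<dots> \<le> real CARD('n) * ?h"
      using c K0 K1 ratio_max_nonneg[of F1 F2 B] by (intro mult_right_mono) auto
    finally show ?thesis by (simp add: algebra_simps)
  qed
  moreover have "real CARD('n) * (K0 / c * K1) > 0" using c K0 K1 by simp
  ultimately show ?thesis by blast
qed

lemma sgn_matrix_inv_image: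
  "x \<in> (\<lambda>x. matrix_inv B *v x) ` F3 k \<Longrightarrow> sgn x \<in> (\<lambda>x. matrix_inv B *v x) ` F3 k"
  by (auto simp: sgn_div_norm matrix_vector_mult_scaleR_complex[symmetric]
      intro!: imageI vec_subspace_scaleR[OF subspace_F3])

lemma layer_dist_ge_bottom_part:
  assumes "1 \<le> k" "k \<le> CARD('n)"
  shows "\<exists>K>0. \<forall>B. \<forall>x\<in>F3 k. matrix_inv B *v x \<noteq> 0 \<longrightarrow>
    norm (basis_proj {1..CARD('n) - k} (matrix_inv B *v x)) / norm (matrix_inv B *v x) \<le> K * layer_dist B k"
proof -
  let ?bot = "{1..CARD('n) - k}"
  obtain K where K: "K > 0" "\<And>x. norm (basis_proj ?bot x) \<le> K * norm x"
    using bounded_linear.pos_bounded[OF bounded_linear_basis_proj, of ?bot] by (auto simp: mult.commute)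
  have "norm (basis_proj ?bot z) / norm z \<le> K * layer_dist B k"
    if "x \<in> F3 k" "z = matrix_inv B *v x" "z \<noteq> 0" for B x z
  proof -
    have "sgn z \<in> sphere 0 1 \<inter> (\<lambda>x. matrix_inv B *v x) ` F3 k"
      using that sgn_matrix_inv_image[of z B k] by (simp add: norm_sgn)
    then have "norm (basis_proj ?bot (sgn z)) / K \<le> layer_dist B k"
      using unit_sphere_F1_nonempty[OF assms(1)] basis_proj_bottom_F1[OF assms(2)]
      by (intro hausdorff_dist_unit_spheres_ge[OF bounded_linear_basis_proj K(2) K(1)]) auto
    moreover have "norm (basis_proj ?bot (sgn z)) = norm (basis_proj ?bot z) / norm z"
      unfolding sgn_div_norm
      by (simp add: linear_scale[OF bounded_linear.linear[OF bounded_linear_basis_proj]] field_simps)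
    ultimately show ?thesis using K(1) by (simp add: pos_divide_le_eq mult.commute)
  qed
  then show ?thesis using K(1) by blast
qed

lemma layer_dist_upper:
  assumes "1 \<le> k" "k \<le> CARD('n)"
  shows "\<exists>C>0. \<forall>B\<in>Stab F1 F2.
    ratio_max F1 F2 B \<le> 1 / C \<longrightarrow> layer_dist B k \<le> C * ratio_max F1 F2 B"
proof -
  let ?top = "{CARD('n) - k + 1..CARD('n)}" and ?bot = "{1..CARD('n) - k}"
  obtain C1 where C1: "C1 > 0" and bound: "\<forall>B\<in>Stab F1 F2. ratio_max F1 F2 B \<le> 1 \<longrightarrow> (\<forall>x\<in>F3 k.
    norm (basis_proj ?bot (matrix_inv B *v x)) \<le> C1 * ratio_max F1 F2 B * norm (basis_proj ?top (matrix_inv B *v x)))"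
    using bottom_part_le_top_part[OF assms(2)] by blast
  define C where "C = max 1 (4 * C1)"
  have "layer_dist B k \<le> C * ratio_max F1 F2 B"
    if B: "B \<in> Stab F1 F2" and small: "ratio_max F1 F2 B \<le> 1 / C" for B
  proof -
    let ?D = "matrix_inv B" and ?r = "ratio_max F1 F2 B"
    have "1 / C \<le> 1" by (simp add: C_def)
    then have "?r \<le> 1" using small by linarith
    have C1_le: "4 * (C1 * ?r) \<le> C * ?r"
      unfolding C_def using ratio_max_nonneg[of F1 F2 B] by (simp add: mult.assoc[symmetric] mult_right_mono)
    moreover have "C * ?r \<le> 1" using small by (simp add: C_def field_simps)
    ultimately have "C1 * ?r \<le> 1 / 2" by linarith
    then have "layer_dist B k \<le> 4 * (C1 * ?r)"
    proof (rule hausdorff_dist_unit_spheres_le[rotated 3])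
      fix s assume "s \<in> (\<lambda>x. ?D *v x) ` F3 k"
      then obtain x where x: "x \<in> F3 k" "s = ?D *v x" by blast
      have "norm (basis_proj ?bot s) \<le> C1 * ?r * norm (basis_proj ?top s)"
        using bound B \<open>?r \<le> 1\<close> x by simp
      moreover have "s - basis_proj ?top s = basis_proj ?bot s"
        using basis_proj_top_add_bottom[of k s] by (metis add_diff_cancel_left')
      ultimately show "\<exists>a\<in>F1 k. norm (s - a) \<le> C1 * ?r * norm a"
        using basis_proj_in_F1[OF assms(2), of s] by (intro bexI[of _ "basis_proj ?top s"]) simp_all
    next
      fix t assume t: "t \<in> F1 k" "norm t = 1"
      then obtain x where x: "x \<in> F3 k" and top: "basis_proj ?top (?D *v x) = t"
        using top_part_of_F3_image_onto_F1[OF assms(2) B] by blast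
      have "?D *v x - t = basis_proj ?bot (?D *v x)"
        using basis_proj_top_add_bottom[of k "?D *v x"] top by (metis add_diff_cancel_left')
      then show "\<exists>y\<in>(\<lambda>x. ?D *v x) ` F3 k. norm (y - t) \<le> C1 * ?r"
        using bound B \<open>?r \<le> 1\<close> x top t(2) by force
    qed (use C1 ratio_max_nonneg[of F1 F2 B] unit_sphere_F1_nonempty[OF assms(1)]
        in \<open>auto intro: sgn_matrix_inv_image vec_subspace_sgn[OF subspace_F1]\<close>)
    then show ?thesis using C1_le by linarith
  qed
  moreover have "C > 0" by (simp add: C_def)
  ultimately show ?thesis by blast
qed

lemma star_witness:
  assumes i: "i \<in> {1..<CARD('n)}"
  shows "\<exists>y\<in>F3 (CARD('n) - i). coord i y = 1 \<and> coord (i + 1) y \<noteq> 0 \<and>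
    (\<forall>j\<in>{i + 2..CARD('n)}. coord j y = 0)"
proof -
  have i': "i \<in> {1..CARD('n)}" using i by auto
  have "proj_L F1 F2 i ` (F2 (i + 1) \<inter> F3 (CARD('n) - i)) = Lline F1 F2 i"
    using star i unfolding property_star_def by (meson bij_betw_imp_surj_on)
  then have "bvec i \<in> proj_L F1 F2 i ` (F2 (i + 1) \<inter> F3 (CARD('n) - i))"
    using bvec_Lline[OF i'] by simp
  then obtain y where y2: "y \<in> F2 (i + 1)" and y3: "y \<in> F3 (CARD('n) - i)"
    and proj: "proj_L F1 F2 i y = bvec i"
    by (auto elim!: imageE)
  have coord_i: "coord i y = 1"
    using arg_cong[OF proj, of "coord i"] by (simp add: proj_L_eq[OF i'] coord_smult coord_bvec[OF i' i'])
  have beyond: "\<forall>j\<in>{i + 2..CARD('n)}. coord j y = 0"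
    using coord_F2[OF y2] i by auto
  have "coord (i + 1) y \<noteq> 0"
  proof
    assume "coord (i + 1) y = 0"
    then have "basis_proj {1..i} y = y"
      using beyond i by (intro basis_proj_eq_self) (auto simp: not_less_eq_eq)
    then have "y \<in> F2 i" using basis_proj_in_F2[of i y] i by simp
    then have "y = 0" using F2_Int_F3_trivial[of i] y3 i by auto
    then show False using coord_i coord_zero by simp
  qed
  then show ?thesis using y3 coord_i beyond by blast
qed

lemma top_part_of_witness_image:
  assumes B: "B \<in> Stab F1 F2" and i: "i \<in> {1..<CARD('n)}"
    and beyond: "\<forall>j\<in>{i + 2..CARD('n)}. coord j y = 0"
  shows "norm (basis_proj {i + 1..CARD('n)} (matrix_inv B *v (mu F1 F2 B (i + 1) *s y)))
    \<le> norm (coord (i + 1) y)"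
proof -
  let ?z = "matrix_inv B *v (mu F1 F2 B (i + 1) *s y)"
  have coord_z: "coord j ?z = mu F1 F2 B (i + 1) * coord j y / mu F1 F2 B j"
    if "j \<in> {1..CARD('n)}" for j
    using coord_matrix_inv[OF B that] by (simp add: coord_smult)
  have "norm (basis_proj {i + 1..CARD('n)} ?z) \<le> (\<Sum>l\<in>{i + 1..CARD('n)}. norm (coord l ?z))"
    by (rule norm_basis_proj_le) auto
  also have "\<dots> = (\<Sum>l\<in>{i + 1}. norm (coord l ?z))"
    using i beyond coord_z by (intro sum.mono_neutral_right) auto
  also have "\<dots> = norm (coord (i + 1) y)"
    using i coord_z[of "i + 1"] mu_nonzero[OF B, of "i + 1"] by simp
  finally show ?thesis .
qed

lemma layer_dist_lower:
  assumes i: "i \<in> {1..<CARD('n)}"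
  shows "\<exists>C>0. \<forall>B\<in>Stab F1 F2.
    min (norm (mu F1 F2 B (i + 1) / mu F1 F2 B i)) 1 \<le> C * layer_dist B (CARD('n) - i)"
proof -
  let ?k = "CARD('n) - i"
  have i': "i \<in> {1..CARD('n)}" and k: "1 \<le> ?k" "?k \<le> CARD('n)" and bot: "CARD('n) - ?k = i"
    using i by auto
  obtain y where y3: "y \<in> F3 ?k" and coord_i: "coord i y = 1" and next_nonzero: "coord (i + 1) y \<noteq> 0"
    and beyond: "\<forall>j\<in>{i + 2..CARD('n)}. coord j y = 0"
    using star_witness[OF i] by blast
  define a where "a = norm (coord (i + 1) y)"
  have "a > 0" using next_nonzero by (simp add: a_def)
  obtain K0 where K0: "K0 > 0" "\<forall>j\<in>{1..CARD('n)}. \<forall>x. norm (coord j x) \<le> K0 * norm x"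
    using coord_bound by blast
  obtain K where K: "K > 0" and far: "\<forall>B. \<forall>x\<in>F3 ?k. matrix_inv B *v x \<noteq> 0 \<longrightarrow>
      norm (basis_proj {1..i} (matrix_inv B *v x)) / norm (matrix_inv B *v x) \<le> K * layer_dist B ?k"
    using layer_dist_ge_bottom_part[OF k] unfolding bot by blast
  define C where "C = 2 * max (K0 * a) 1 * K"
  have "min (norm (mu F1 F2 B (i + 1) / mu F1 F2 B i)) 1 \<le> C * layer_dist B ?k"
    if B: "B \<in> Stab F1 F2" for B
  proof -
    let ?mu = "mu F1 F2 B"
    define z where "z = matrix_inv B *v (?mu (i + 1) *s y)"
    define t where "t = norm (basis_proj {1..i} z)"
    have "?mu (i + 1) / ?mu i = coord i (basis_proj {1..i} z)"
      using coord_matrix_inv[OF B i', of "?mu (i + 1) *s y"] coord_basis_proj[of "{1..i}" i z] i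
      by (simp add: z_def coord_smult coord_i)
    then have ratio_le: "norm (?mu (i + 1) / ?mu i) \<le> K0 * t"
      using K0(2) i' unfolding t_def by simp
    have "z = basis_proj {i + 1..CARD('n)} z + basis_proj {1..i} z"
      using basis_proj_top_add_bottom[of ?k z] i by simp
    then have "norm z \<le> a + t"
      using norm_triangle_ineq[of "basis_proj {i + 1..CARD('n)} z" "basis_proj {1..i} z"]
        top_part_of_witness_image[OF B i beyond] unfolding a_def t_def z_def by simp
    have "coord (i + 1) z = coord (i + 1) y"
      using coord_matrix_inv[OF B, of "i + 1" "?mu (i + 1) *s y"] mu_nonzero[OF B, of "i + 1"] i
      by (simp add: z_def coord_smult)
    then have "z \<noteq> 0" using next_nonzero coord_zero by force
    have "min (norm (?mu (i + 1) / ?mu i)) 1 \<le> min (K0 * t) 1"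
      using ratio_le by (rule min.mono) simp
    also have "\<dots> \<le> 2 * max (K0 * a) 1 * (K0 * t / (K0 * norm z))"
      using K0(1) \<open>a > 0\<close> \<open>z \<noteq> 0\<close> \<open>norm z \<le> a + t\<close>
      by (intro min_le_mult_frac) (auto simp: t_def distrib_left[symmetric])
    also have "\<dots> \<le> 2 * max (K0 * a) 1 * (K * layer_dist B ?k)"
      using far y3 \<open>z \<noteq> 0\<close> K0(1) vec.subspace_scale[OF subspace_F3]
      unfolding z_def t_def by (intro mult_left_mono) auto
    finally show ?thesis by (simp add: C_def mult.assoc)
  qed
  moreover have "C > 0" using K0(1) K by (simp add: C_def)
  ultimately show ?thesis by blast
qed

lemma flag_dist_lower:
  "\<exists>C>0. \<forall>B\<in>Stab F1 F2.
    min (ratio_max F1 F2 B) 1 \<le> C * flag_dist (flag_act (matrix_inv B) F3) F1"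
proof -
  obtain C where C: "C > 0" and layer: "\<forall>i\<in>{1..<CARD('n)}. \<forall>B\<in>Stab F1 F2.
      min (norm (mu F1 F2 B (i + 1) / mu F1 F2 B i)) 1 \<le> C * layer_dist B (CARD('n) - i)"
  proof (atomize_elim, rule finite_ex_common_bound)
    fix i C C' assume i: "i \<in> {1..<CARD('n)}" and "0 < C" "C \<le> C'" and "\<forall>B\<in>Stab F1 F2.
      min (norm (mu F1 F2 B (i + 1) / mu F1 F2 B i)) 1 \<le> C * layer_dist B (CARD('n) - i)"
    moreover have "C * layer_dist B (CARD('n) - i) \<le> C' * layer_dist B (CARD('n) - i)" for B
      using i \<open>C \<le> C'\<close> by (intro mult_right_mono layer_dist_nonneg) auto
    ultimately show "\<forall>B\<in>Stab F1 F2.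
      min (norm (mu F1 F2 B (i + 1) / mu F1 F2 B i)) 1 \<le> C' * layer_dist B (CARD('n) - i)"
      by (meson order.trans)
  next
    show "\<exists>C>0. \<forall>B\<in>Stab F1 F2.
      min (norm (mu F1 F2 B (i + 1) / mu F1 F2 B i)) 1 \<le> C * layer_dist B (CARD('n) - i)"
      if "i \<in> {1..<CARD('n)}" for i
      using that by (rule layer_dist_lower)
  qed simp
  have "min (ratio_max F1 F2 B) 1 \<le> C * flag_dist (flag_act (matrix_inv B) F3) F1"
    if B: "B \<in> Stab F1 F2" for B
  proof (cases rule: ratio_max_attained[of F1 F2 B])
    case 1
    then show ?thesis using C flag_dist_nonneg[of B] by simp
  next
    case (2 i)
    have "min (ratio_max F1 F2 B) 1 \<le> C * layer_dist B (CARD('n) - i)"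
      using 2 layer B by simp
    also have "\<dots> \<le> C * (\<Sum>k\<in>{1..<CARD('n)}. layer_dist B k)"
      using 2(1) C by (intro mult_left_mono member_le_sum layer_dist_nonneg) auto
    finally show ?thesis unfolding flag_dist_eq_sum_layer_dist .
  qed
  then show ?thesis using C by blast
qed

lemma flag_dist_upper:
  "\<exists>C>0. \<forall>B\<in>Stab F1 F2. ratio_max F1 F2 B \<le> 1 / C \<longrightarrow>
    flag_dist (flag_act (matrix_inv B) F3) F1 \<le> C * ratio_max F1 F2 B"
proof -
  obtain C where C: "C > 0" and layer: "\<forall>k\<in>{1..<CARD('n)}. \<forall>B\<in>Stab F1 F2.
      ratio_max F1 F2 B \<le> 1 / C \<longrightarrow> layer_dist B k \<le> C * ratio_max F1 F2 B"
  proof (atomize_elim, rule finite_ex_common_bound)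
    fix k C C' assume "0 < C" "C \<le> C'" and "\<forall>B\<in>Stab F1 F2.
      ratio_max F1 F2 B \<le> 1 / C \<longrightarrow> layer_dist B k \<le> C * ratio_max F1 F2 B"
    moreover have "1 / C' \<le> 1 / C" "C * ratio_max F1 F2 B \<le> C' * ratio_max F1 F2 B" for B
      using \<open>0 < C\<close> \<open>C \<le> C'\<close> ratio_max_nonneg[of F1 F2 B]
      by (auto intro: frac_le mult_right_mono)
    ultimately show "\<forall>B\<in>Stab F1 F2.
      ratio_max F1 F2 B \<le> 1 / C' \<longrightarrow> layer_dist B k \<le> C' * ratio_max F1 F2 B"
      by (meson order.trans)
  next
    show "\<exists>C>0. \<forall>B\<in>Stab F1 F2.
      ratio_max F1 F2 B \<le> 1 / C \<longrightarrow> layer_dist B k \<le> C * ratio_max F1 F2 B"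
      if "k \<in> {1..<CARD('n)}" for k
      using that by (intro layer_dist_upper) auto
  qed simp
  have "flag_dist (flag_act (matrix_inv B) F3) F1 \<le> (real CARD('n) * C) * ratio_max F1 F2 B"
    if B: "B \<in> Stab F1 F2" and small: "ratio_max F1 F2 B \<le> 1 / (real CARD('n) * C)" for B
  proof -
    have "1 / (real CARD('n) * C) \<le> 1 / C" using C by (simp add: field_simps)
    then have "layer_dist B k \<le> C * ratio_max F1 F2 B" if "k \<in> {1..<CARD('n)}" for k
      using layer B small that by auto
    then have "flag_dist (flag_act (matrix_inv B) F3) F1 \<le> real (card {1..<CARD('n)}) * (C * ratio_max F1 F2 B)"
      unfolding flag_dist_eq_sum_layer_dist by (rule sum_bounded_above)
    also have "\<dots> \<le> real CARD('n) * (C * ratio_max F1 F2 B)"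
      using C ratio_max_nonneg[of F1 F2 B] by (intro mult_right_mono) auto
    finally show ?thesis by simp
  qed
  then show ?thesis using C by (intro exI[of _ "real CARD('n) * C"]) auto
qed

lemma flag_dist_comparable_ratio_max:
  "\<exists>C>0. \<forall>B\<in>Stab F1 F2.
    min (ratio_max F1 F2 B) 1 \<le> C * flag_dist (flag_act (matrix_inv B) F3) F1 \<and>
    (ratio_max F1 F2 B \<le> 1 / C \<longrightarrow> flag_dist (flag_act (matrix_inv B) F3) F1 \<le> C * ratio_max F1 F2 B)"
proof -
  obtain C1 where C1: "C1 > 0" and lower: "\<forall>B\<in>Stab F1 F2.
      min (ratio_max F1 F2 B) 1 \<le> C1 * flag_dist (flag_act (matrix_inv B) F3) F1"
    using flag_dist_lower by blast
  obtain C2 where C2: "C2 > 0" and upper: "\<forall>B\<in>Stab F1 F2. ratio_max F1 F2 B \<le> 1 / C2 \<longrightarrow>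
      flag_dist (flag_act (matrix_inv B) F3) F1 \<le> C2 * ratio_max F1 F2 B"
    using flag_dist_upper by blast
  let ?C = "max C1 C2"
  have mono: "C1 * flag_dist (flag_act (matrix_inv B) F3) F1 \<le> ?C * flag_dist (flag_act (matrix_inv B) F3) F1"
    "C2 * ratio_max F1 F2 B \<le> ?C * ratio_max F1 F2 B" "1 / ?C \<le> 1 / C2" for B
    using C2 flag_dist_nonneg[of B] ratio_max_nonneg[of F1 F2 B] by (auto intro: mult_right_mono frac_le)
  show ?thesis
  proof (intro exI[of _ ?C] conjI ballI impI)
    fix B assume B: "B \<in> Stab F1 F2"
    show "min (ratio_max F1 F2 B) 1 \<le> ?C * flag_dist (flag_act (matrix_inv B) F3) F1"
      using lower B by (intro order.trans[OF _ mono(1)]) blast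
    assume "ratio_max F1 F2 B \<le> 1 / ?C"
    then show "flag_dist (flag_act (matrix_inv B) F3) F1 \<le> ?C * ratio_max F1 F2 B"
      using upper B mono(3) by (intro order.trans[OF _ mono(2)]) auto
  qed (use C1 in simp)
qed

lemma flag_dist_ratio_max_sequences:
  "\<exists>C>0. \<forall>B :: nat \<Rightarrow> complex^'n^'n. (\<forall>n. B n \<in> Stab F1 F2) \<longrightarrow>
    (((\<lambda>n. flag_dist (flag_act (matrix_inv (B n)) F3) F1) \<longlonglongrightarrow> 0) \<longleftrightarrow>
      ((\<lambda>n. ratio_max F1 F2 (B n)) \<longlonglongrightarrow> 0)) \<and>
    ((\<lambda>n. flag_dist (flag_act (matrix_inv (B n)) F3) F1) \<longlonglongrightarrow> 0 \<longrightarrow>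
      (\<forall>\<^sub>F n in sequentially.
         ratio_max F1 F2 (B n) / C \<le> flag_dist (flag_act (matrix_inv (B n)) F3) F1 \<and>
         flag_dist (flag_act (matrix_inv (B n)) F3) F1 \<le> C * ratio_max F1 F2 (B n)))"
proof -
  obtain C where C: "C > 0" and comparable: "\<forall>B\<in>Stab F1 F2.
      min (ratio_max F1 F2 B) 1 \<le> C * flag_dist (flag_act (matrix_inv B) F3) F1 \<and>
      (ratio_max F1 F2 B \<le> 1 / C \<longrightarrow> flag_dist (flag_act (matrix_inv B) F3) F1 \<le> C * ratio_max F1 F2 B)"
    using flag_dist_comparable_ratio_max by blast
  show ?thesis
  proof (intro exI[of _ C] conjI allI impI)
    fix B :: "nat \<Rightarrow> complex^'n^'n" assume B: "\<forall>n. B n \<in> Stab F1 F2"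
    have lower: "min (ratio_max F1 F2 (B n)) 1 \<le> C * flag_dist (flag_act (matrix_inv (B n)) F3) F1"
      and upper: "ratio_max F1 F2 (B n) \<le> 1 / C \<Longrightarrow>
        flag_dist (flag_act (matrix_inv (B n)) F3) F1 \<le> C * ratio_max F1 F2 (B n)" for n
      using comparable B by auto
    show "((\<lambda>n. flag_dist (flag_act (matrix_inv (B n)) F3) F1) \<longlonglongrightarrow> 0) \<longleftrightarrow>
        ((\<lambda>n. ratio_max F1 F2 (B n)) \<longlonglongrightarrow> 0)"
      by (rule tendsto_zero_iff_if_comparable[OF C flag_dist_nonneg ratio_max_nonneg lower upper])
    show "\<forall>\<^sub>F n in sequentially.
        ratio_max F1 F2 (B n) / C \<le> flag_dist (flag_act (matrix_inv (B n)) F3) F1 \<and>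
        flag_dist (flag_act (matrix_inv (B n)) F3) F1 \<le> C * ratio_max F1 F2 (B n)"
      if "(\<lambda>n. flag_dist (flag_act (matrix_inv (B n)) F3) F1) \<longlonglongrightarrow> 0"
      by (rule eventually_comparable_if_tendsto_zero[OF C flag_dist_nonneg ratio_max_nonneg lower upper that])
  qed (rule C)
qed

end

theorem mainTheorem13:
  fixes F1 F2 F3 :: "nat \<Rightarrow> (complex^'n) set"
  assumes "is_flag F1" and "is_flag F2" and "is_flag F3"
    and "general_position F1 F2 F3"
    and "property_star F1 F2 F3"
  shows "(\<forall>B :: nat \<Rightarrow> complex^'n^'n. (\<forall>n. B n \<in> Stab F1 F2) \<longrightarrow>
            ((\<lambda>n. flag_dist (flag_act (matrix_inv (B n)) F3) F1) \<longlonglongrightarrow> 0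
             \<longleftrightarrow> (\<lambda>n. ratio_max F1 F2 (B n)) \<longlonglongrightarrow> 0))
       \<and> (\<exists>C>0. \<forall>B :: nat \<Rightarrow> complex^'n^'n. (\<forall>n. B n \<in> Stab F1 F2) \<longrightarrow>
            (\<lambda>n. flag_dist (flag_act (matrix_inv (B n)) F3) F1) \<longlonglongrightarrow> 0 \<longrightarrow>
            (\<forall>\<^sub>F n in sequentially.
               ratio_max F1 F2 (B n) / C \<le> flag_dist (flag_act (matrix_inv (B n)) F3) F1 \<and>
               flag_dist (flag_act (matrix_inv (B n)) F3) F1 \<le> C * ratio_max F1 F2 (B n)))"
proof -
  interpret star_triple F1 F2 F3
    using assms(1-3,5) by unfold_locales
  show ?thesis using flag_dist_ratio_max_sequences by blast
qed

end
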